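(* Let $(X,M)$ be a supermidpoint set, with associated binary operation $m(x,y)=M(x,y,y,\dots)$. The following are equivalent: (1) $X$ is cancellative, i.e. $m(x,y)=m(x,z)$ implies $y=z$; (2) for all sequences $(x_i),(y_i),(z_i),(w_i)$ of elements of $X$, if $m_n(x_0,\dots,x_{n-1},z_n)=m_n(y_0,\dots,y_{n-1},w_n)$ for all $n\ge 0$, then $M(x_0,x_1,x_2,\dots)=M(y_0,y_1,y_2,\dots)$.
   Context: A supermidpoint set is a set $X$ with $M\colon X^\omega\to X$ (written $M_i\,x_i=M(x_0,x_1,\dots)$) satisfying: $M(x,x,x,\dots)=x$; $M(x,y,y,\dots)=M(y,x,x,\dots)$; $M_iM_j\,x_{ij}=M_jM_i\,x_{ij}$; $M_i\,x_i=M(x_0,M_i x_{i+1},M_i x_{i+1},\dots)$. Derived operations: $m_0(x)=x$, $m_n(x_0,\dots,x_n)=m(x_0,m_{n-1}(x_1,\dots,x_n))$ for $n\ge1$ (so for $n=0$ the hypothesis reads $z_0=w_0$). *)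

theory Defs
  imports Main
begin

definition supermidpoint :: "((nat \<Rightarrow> 'a) \<Rightarrow> 'a) \<Rightarrow> bool" where
  "supermidpoint M \<longleftrightarrow>
     (\<forall>x. M (\<lambda>_. x) = x) \<and>
     (\<forall>x y. M (\<lambda>i. if i = 0 then x else y) = M (\<lambda>i. if i = 0 then y else x)) \<and>
     (\<forall>x :: nat \<Rightarrow> nat \<Rightarrow> 'a. M (\<lambda>i. M (\<lambda>j. x i j)) = M (\<lambda>j. M (\<lambda>i. x i j))) \<and>
     (\<forall>x. M x = M (\<lambda>i. if i = 0 then x 0 else M (\<lambda>k. x (Suc k))))"

definition mid2 :: "((nat \<Rightarrow> 'a) \<Rightarrow> 'a) \<Rightarrow> 'a \<Rightarrow> 'a \<Rightarrow> 'a" where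
  "mid2 M x y = M (\<lambda>i. if i = 0 then x else y)"

text \<open>Derived operations: midn M n f = m_n(f 0, ..., f n).\<close>
fun midn :: "((nat \<Rightarrow> 'a) \<Rightarrow> 'a) \<Rightarrow> nat \<Rightarrow> (nat \<Rightarrow> 'a) \<Rightarrow> 'a" where
  "midn M 0 f = f 0"
| "midn M (Suc n) f = mid2 M (f 0) (midn M n (\<lambda>i. f (Suc i)))"

definition cancellative :: "((nat \<Rightarrow> 'a) \<Rightarrow> 'a) \<Rightarrow> bool" where
  "cancellative M \<longleftrightarrow> (\<forall>x y z. mid2 M x y = mid2 M x z \<longrightarrow> y = z)"

end

theory Submission
  imports Defs
begin

text \<open>In a cancellative supermidpoint set think of \<open>m(u,v)\<close> as \<open>(u + v)/2\<close>. Let \<open>a\<^sub>n\<close> and \<open>b\<^sub>n\<close>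
  be the averages of the tails \<open>x\<^sub>n, x\<^sub>n\<^sub>+\<^sub>1, \<dots>\<close> and \<open>y\<^sub>n, y\<^sub>n\<^sub>+\<^sub>1, \<dots>\<close>. Cancelling the common prefix
  in two consecutive hypotheses gives a relation between \<open>x\<^sub>n, y\<^sub>n, z\<^sub>n, w\<^sub>n, z\<^sub>n\<^sub>+\<^sub>1, w\<^sub>n\<^sub>+\<^sub>1\<close>, which
  says that the gap \<open>d\<^sub>n = a\<^sub>n + w\<^sub>n - b\<^sub>n - z\<^sub>n\<close> satisfies \<open>d\<^sub>n\<^sub>+\<^sub>1 = 2 d\<^sub>n\<close>. Averaging over
  \<open>n\<close> forces \<open>d\<^sub>0 = 0\<close>, i.e. \<open>M x = M y\<close>, since \<open>z\<^sub>0 = w\<^sub>0\<close>.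
  Conversely, if \<open>m(x,y) = m(x,z)\<close> then the constant sequences \<open>y\<close> and \<open>z\<close> satisfy the
  hypothesis with \<open>x\<close> as tail, so \<open>y = M y = M z = z\<close>.\<close>

locale midpoint_algebra =
  fixes mid :: "'a \<Rightarrow> 'a \<Rightarrow> 'a"
  assumes mid_idem: "mid a a = a"
    and mid_commute: "mid a b = mid b a"
    and mid_medial: "mid (mid a b) (mid c d) = mid (mid a c) (mid b d)"
begin

lemma mid_left_distrib: "mid a (mid b c) = mid (mid a b) (mid a c)"
  using mid_medial[of a a b c] by (simp add: mid_idem)

lemma mid_rearrange:
  "mid (mid (mid a w) (mid a b)) (mid z (mid y b)) = mid (mid (mid y w) z) (mid a b)"
proof -
  have "mid (mid (mid a w) (mid a b)) (mid z (mid y b)) = mid (mid a (mid w b)) (mid z (mid y b))"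
    by (simp only: mid_left_distrib[of a w b])
  also have "\<dots> = mid (mid a z) (mid (mid w b) (mid y b))" by (rule mid_medial)
  also have "\<dots> = mid (mid a z) (mid (mid w y) b)" using mid_medial[of w b y b] by (simp add: mid_idem)
  also have "\<dots> = mid (mid a (mid w y)) (mid z b)" by (rule mid_medial)
  also have "\<dots> = mid (mid (mid y w) a) (mid z b)" by (simp only: mid_commute[of w] mid_commute[of a])
  also have "\<dots> = mid (mid (mid y w) z) (mid a b)" by (rule mid_medial)
  finally show ?thesis .
qed

fun mid_fold :: "nat \<Rightarrow> (nat \<Rightarrow> 'a) \<Rightarrow> 'a \<Rightarrow> 'a" where
  "mid_fold 0 u p = p"
| "mid_fold (Suc n) u p = mid (u 0) (mid_fold n (\<lambda>i. u (Suc i)) p)"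

lemma mid_fold_Suc_last: "mid_fold (Suc n) u p = mid_fold n u (mid (u n) p)"
proof (induction n arbitrary: u)
  case (Suc n)
  have "mid_fold (Suc (Suc n)) u p = mid (u 0) (mid_fold (Suc n) (\<lambda>i. u (Suc i)) p)"
    by (rule mid_fold.simps(2))
  also have "\<dots> = mid (u 0) (mid_fold n (\<lambda>i. u (Suc i)) (mid (u (Suc n)) p))"
    by (simp only: Suc.IH)
  also have "\<dots> = mid_fold (Suc n) u (mid (u (Suc n)) p)"
    by simp
  finally show ?case .
qed simp

lemma mid_fold_medial:
  "mid (mid_fold n u p) (mid_fold n v q) = mid_fold n (\<lambda>i. mid (u i) (v i)) (mid p q)"
  by (induction n arbitrary: u v) (simp_all add: mid_medial)

lemma mid_swap_if_eq:
  assumes "mid y g = mid z g"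
  shows "mid y (mid z g) = mid z (mid y g)"
proof -
  have "mid y (mid z g) = mid (mid y z) (mid y g)" by (rule mid_left_distrib)
  also have "\<dots> = mid (mid z y) (mid z g)" using assms by (simp only: mid_commute[of y z])
  also have "\<dots> = mid z (mid y g)" by (rule mid_left_distrib[symmetric])
  finally show ?thesis .
qed

lemma mid_fold_const_eq:
  assumes "mid x y = mid x z"
  shows "mid_fold n (\<lambda>_. y) x = mid_fold n (\<lambda>_. z) x"
proof -
  have "mid_fold n (\<lambda>_. y) x = mid_fold n (\<lambda>_. z) x \<and>
        mid y (mid_fold n (\<lambda>_. y) x) = mid z (mid_fold n (\<lambda>_. y) x)"
  proof (induction n)
    case 0
    then show ?case using assms mid_commute by simp
  next
    case (Suc n)
    let ?g = "mid_fold n (\<lambda>_. y) x"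
    have step: "mid y ?g = mid z ?g" using Suc by blast
    have fold_y: "mid_fold (Suc n) (\<lambda>_. y) x = mid y ?g" by simp
    have fold_z: "mid_fold (Suc n) (\<lambda>_. z) x = mid z ?g" using Suc by simp
    have "mid y (mid y ?g) = mid z (mid y ?g)"
      using step mid_swap_if_eq[OF step] by simp
    with step show ?case unfolding fold_y fold_z by simp
  qed
  then show ?thesis ..
qed

text \<open>With \<open>a = m(x, a')\<close>, \<open>b = m(y, b')\<close> and \<open>t = m(a', b')\<close>: if the hypothesis relates
  \<open>x, z', w\<close> to \<open>y, w', z\<close>, then the gaps of \<open>(a, w, z, b)\<close> and \<open>(a', w', z', b')\<close>
  are related as \<open>d' = 2 d\<close>.\<close>
lemma gap_step:
  assumes "mid (mid x z') w = mid (mid y w') z"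
  shows "mid (mid (mid a' w') (mid a' b')) (mid z (mid y b'))
       = mid (mid (mid z' b') (mid a' b')) (mid (mid x a') w)"
proof -
  have "mid (mid (mid a' w') (mid a' b')) (mid z (mid y b')) = mid (mid (mid y w') z) (mid a' b')"
    by (rule mid_rearrange)
  also have "\<dots> = mid (mid (mid x z') w) (mid b' a')"
    using assms by (simp only: mid_commute[of a' b'])
  also have "\<dots> = mid (mid (mid b' z') (mid b' a')) (mid w (mid x a'))"
    by (rule mid_rearrange[symmetric])
  also have "\<dots> = mid (mid (mid z' b') (mid a' b')) (mid (mid x a') w)"
    by (simp only: mid_commute[of b' z'] mid_commute[of b' a'] mid_commute[of w])
  finally show ?thesis .
qed

end

locale cancellative_midpoint_algebra = midpoint_algebra +
  assumes mid_cancel: "mid a b = mid a c \<Longrightarrow> b = c"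
begin

lemma mid_fold_cancel: "mid_fold n u p = mid_fold n u q \<Longrightarrow> p = q"
  by (induction n arbitrary: u) (auto dest: mid_cancel)

lemma mid_fold_consecutive:
  assumes "mid_fold n x p = mid_fold n y q"
    and "mid_fold (Suc n) x p' = mid_fold (Suc n) y q'"
  shows "mid (mid (x n) p') q = mid (mid (y n) q') p"
proof -
  have "mid_fold n x (mid (x n) p') = mid_fold n y (mid (y n) q')"
    using assms(2) by (simp only: mid_fold_Suc_last)
  then have "mid (mid_fold n x (mid (x n) p')) (mid_fold n y q)
      = mid (mid_fold n y (mid (y n) q')) (mid_fold n x p)"
    using assms(1) by simp
  then have "mid_fold n (\<lambda>i. mid (x i) (y i)) (mid (mid (x n) p') q)
      = mid_fold n (\<lambda>i. mid (y i) (x i)) (mid (mid (y n) q') p)"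
    by (simp add: mid_fold_medial)
  moreover have "(\<lambda>i. mid (y i) (x i)) = (\<lambda>i. mid (x i) (y i))"
    using mid_commute by metis
  ultimately show ?thesis by (metis mid_fold_cancel)
qed

end

locale supermidpoint_set =
  fixes M :: "(nat \<Rightarrow> 'a) \<Rightarrow> 'a"
  assumes supermidpoint: "supermidpoint M"
begin

lemma M_const: "M (\<lambda>_. x) = x"
  using supermidpoint unfolding supermidpoint_def by simp

lemma M_unfold: "M x = mid2 M (x 0) (M (\<lambda>k. x (Suc k)))"
  using supermidpoint unfolding supermidpoint_def mid2_def by blast

lemma M_swap: "M (\<lambda>i. M (\<lambda>j. x i j)) = M (\<lambda>j. M (\<lambda>i. x i j))"
  using supermidpoint unfolding supermidpoint_def by blast

lemma M_mid2_distrib: "M (\<lambda>i. mid2 M (f i) (g i)) = mid2 M (M f) (M g)"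
proof -
  have "M (\<lambda>i. mid2 M (f i) (g i)) = M (\<lambda>j. M (\<lambda>i. if j = 0 then f i else g i))"
    unfolding mid2_def by (rule M_swap)
  also have "(\<lambda>j. M (\<lambda>i. if j = 0 then f i else g i)) = (\<lambda>j. if j = 0 then M f else M g)"
    by auto
  finally show ?thesis by (simp only: mid2_def)
qed

lemma mid2_medial: "mid2 M (mid2 M a b) (mid2 M c d) = mid2 M (mid2 M a c) (mid2 M b d)"
proof -
  define f g where "f = (\<lambda>i::nat. if i = 0 then a else c)"
    and "g = (\<lambda>i::nat. if i = 0 then b else d)"
  have "(\<lambda>i. if i = 0 then mid2 M a b else mid2 M c d) = (\<lambda>i. mid2 M (f i) (g i))"
    by (auto simp: f_def g_def)
  then have "mid2 M (mid2 M a b) (mid2 M c d) = M (\<lambda>i. mid2 M (f i) (g i))"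
    by (simp only: mid2_def[of M "mid2 M a b"])
  also have "\<dots> = mid2 M (M f) (M g)" by (rule M_mid2_distrib)
  also have "M f = mid2 M a c" by (simp only: f_def mid2_def)
  also have "M g = mid2 M b d" by (simp only: g_def mid2_def)
  finally show ?thesis .
qed

end

sublocale supermidpoint_set \<subseteq> midpoint_algebra "mid2 M"
proof
  show "mid2 M a a = a" for a
    by (simp add: mid2_def M_const)
  show "mid2 M a b = mid2 M b a" for a b
    using supermidpoint unfolding supermidpoint_def mid2_def by blast
qed (rule mid2_medial)

context supermidpoint_set
begin

lemma midn_eq_mid_fold: "midn M n (\<lambda>i. if i < n then u i else p) = mid_fold n u p"
proof (induction n arbitrary: u)
  case (Suc n)
  have "(\<lambda>i. if Suc i < Suc n then u (Suc i) else p) = (\<lambda>i. if i < n then u (Suc i) else p)"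
    by simp
  then show ?case using Suc[of "\<lambda>i. u (Suc i)"] by simp
qed simp

lemma cancellative_iff_cancellative_midpoint_algebra: "cancellative M \<longleftrightarrow> cancellative_midpoint_algebra (mid2 M)"
  unfolding cancellative_def cancellative_midpoint_algebra_def
    cancellative_midpoint_algebra_axioms_def
  using midpoint_algebra_axioms by blast

text \<open>If the gaps \<open>\<alpha>\<^sub>n - \<beta>\<^sub>n\<close> double at each step, applying \<open>M\<close> over \<open>n\<close> yields
  \<open>M(\<alpha> - \<beta>) = (\<alpha>\<^sub>0 - \<beta>\<^sub>0)/2 + M(\<alpha> - \<beta>)\<close>, so the first gap vanishes.\<close>
lemma gap_doubling_start_eq:
  assumes "cancellative M"
    and gap: "\<And>n. mid2 M (mid2 M (\<alpha> (Suc n)) (t n)) (\<beta> n)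
                 = mid2 M (mid2 M (\<beta> (Suc n)) (t n)) (\<alpha> n)"
  shows "\<alpha> 0 = \<beta> 0"
proof -
  interpret cancellative_midpoint_algebra "mid2 M"
    using assms(1) cancellative_iff_cancellative_midpoint_algebra by blast
  define P Q T where "P = M (\<lambda>n. \<alpha> (Suc n))" and "Q = M (\<lambda>n. \<beta> (Suc n))" and "T = M t"
  have "M (\<lambda>n. mid2 M (mid2 M (\<alpha> (Suc n)) (t n)) (\<beta> n))
      = M (\<lambda>n. mid2 M (mid2 M (\<beta> (Suc n)) (t n)) (\<alpha> n))"
    using gap by simp
  then have "mid2 M (mid2 M P T) (M \<beta>) = mid2 M (mid2 M Q T) (M \<alpha>)"
    unfolding P_def Q_def T_def by (simp add: M_mid2_distrib)
  then have "mid2 M (mid2 M P T) (mid2 M (\<beta> 0) Q) = mid2 M (mid2 M Q T) (mid2 M (\<alpha> 0) P)"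
    unfolding P_def Q_def by (metis M_unfold)
  also have "\<dots> = mid2 M (mid2 M P T) (mid2 M (\<alpha> 0) Q)"
    by (metis mid_medial mid_commute)
  finally have "mid2 M Q (\<beta> 0) = mid2 M Q (\<alpha> 0)"
    by (metis mid_cancel mid_commute)
  then show ?thesis by (metis mid_cancel)
qed

lemma M_eq_if_mid_fold_eq:
  assumes canc: "cancellative M"
    and hyp: "\<And>n. mid_fold n x (z n) = mid_fold n y (w n)"
  shows "M x = M y"
proof -
  interpret cancellative_midpoint_algebra "mid2 M"
    using canc cancellative_iff_cancellative_midpoint_algebra by blast
  define a where "a n = M (\<lambda>i. x (n + i))" for n
  define b where "b n = M (\<lambda>i. y (n + i))" for n
  have a_unfold: "a n = mid2 M (x n) (a (Suc n))" for n
    unfolding a_def using M_unfold[of "\<lambda>i. x (n + i)"] by simp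
  have b_unfold: "b n = mid2 M (y n) (b (Suc n))" for n
    unfolding b_def using M_unfold[of "\<lambda>i. y (n + i)"] by simp
  have "mid2 M (mid2 M (x n) (z (Suc n))) (w n) = mid2 M (mid2 M (y n) (w (Suc n))) (z n)" for n
    using mid_fold_consecutive hyp by blast
  then have "mid2 M (mid2 M (mid2 M (a (Suc n)) (w (Suc n))) (mid2 M (a (Suc n)) (b (Suc n))))
                    (mid2 M (z n) (b n))
           = mid2 M (mid2 M (mid2 M (z (Suc n)) (b (Suc n))) (mid2 M (a (Suc n)) (b (Suc n))))
                    (mid2 M (a n) (w n))" for n
    unfolding a_unfold[of n] b_unfold[of n] by (rule gap_step)
  then have "mid2 M (a 0) (w 0) = mid2 M (z 0) (b 0)"
    by (rule gap_doubling_start_eq[OF canc])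
  moreover have "z 0 = w 0" using hyp[of 0] by simp
  ultimately have "mid2 M (w 0) (a 0) = mid2 M (w 0) (b 0)"
    using mid_commute by metis
  then show ?thesis unfolding a_def b_def by (simp add: mid_cancel)
qed

lemma cancellative_if_mid_fold_determines_M:
  assumes "\<And>x y z w. (\<And>n. mid_fold n x (z n) = mid_fold n y (w n)) \<Longrightarrow> M x = M y"
  shows "cancellative M"
  unfolding cancellative_def
proof (intro allI impI)
  fix x y z
  assume "mid2 M x y = mid2 M x z"
  then have "M (\<lambda>_. y) = M (\<lambda>_. z)"
    using assms[of "\<lambda>_. y" "\<lambda>_. x" "\<lambda>_. z" "\<lambda>_. x"] mid_fold_const_eq by blast
  then show "y = z" by (simp add: M_const)
qed

end

theorem mainTheorem6:
  fixes M :: "(nat \<Rightarrow> 'a) \<Rightarrow> 'a"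
  assumes "supermidpoint M"
  shows "cancellative M \<longleftrightarrow>
    (\<forall>x y z w :: nat \<Rightarrow> 'a.
       (\<forall>n. midn M n (\<lambda>i. if i < n then x i else z n) =
            midn M n (\<lambda>i. if i < n then y i else w n))
       \<longrightarrow> M x = M y)"
proof -
  interpret supermidpoint_set M using assms by unfold_locales
  show ?thesis
    unfolding midn_eq_mid_fold
    using M_eq_if_mid_fold_eq cancellative_if_mid_fold_determines_M by blast
qed

end
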